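(* For $1\le i<d$, the normalizer $\{g\in O_d(\mathbb C): gL^{(i)}=L^{(i)}\}$ of $L^{(i)}$ is equal to $N_d^{d-i}(\mathbb C)$.
   Context: Fix $d\ge2$. $V=\mathbb C^d\oplus\mathfrak{so}(d,\mathbb C)$, elements $(v,M)$ with $v=(c_1,\dots,c_d)^\top$, $M$ complex skew-symmetric, $M_{ij}=c_{ij}=-M_{ji}$ for $i<j$; $O_d(\mathbb C)=\{A:AA^\top=I\}$ acts by $A\cdot(v,M)=(Av,AMA^\top)$. $L^{(1)}=\{c_1=\dots=c_{d-1}=0\}$ and for $2\le i\le d-1$, $L^{(i)}=\{(v,M)\in L^{(i-1)}:c_{k(d-i+2)}=0,\ 1\le k\le d-i\}$. For $1\le j<d$, $N_d^{j}(\mathbb C)$ is the subgroup of $O_d(\mathbb C)$ consisting of block-diagonal matrices $\mathrm{diag}(B,\pm1,\dots,\pm1)$ with $B\in O_j(\mathbb C)$ (upper-left $j\times j$ block) and the remaining $d-j$ diagonal entries each in $\{-1,1\}$ (all other entries zero). *)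

theory Defs
  imports Complex_Main "Jordan_Normal_Form.Matrix"
begin

text \<open>Matrices/vectors are 0-indexed in Jordan_Normal_Form: the paper's c_i is v $ (i-1)
  and c_ij is M $$ (i-1, j-1).\<close>

definition orth_group :: "nat \<Rightarrow> complex mat set" where
  "orth_group d = {A \<in> carrier_mat d d. A * transpose_mat A = 1\<^sub>m d}"

definition Vsp :: "nat \<Rightarrow> (complex vec \<times> complex mat) set" where
  "Vsp d = {(v, M). v \<in> carrier_vec d \<and> M \<in> carrier_mat d d \<and> transpose_mat M = - M}"

definition act :: "complex mat \<Rightarrow> complex vec \<times> complex mat \<Rightarrow> complex vec \<times> complex mat" where
  "act A x = (A *\<^sub>v fst x, A * snd x * transpose_mat A)"

fun Lsub :: "nat \<Rightarrow> nat \<Rightarrow> (complex vec \<times> complex mat) set" where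
  "Lsub d 0 = Vsp d"
| "Lsub d (Suc 0) = {x \<in> Vsp d. \<forall>j\<in>{1..d-1}. fst x $ (j - 1) = 0}"
| "Lsub d (Suc (Suc n)) =
     {x \<in> Lsub d (Suc n). \<forall>k\<in>{1..d - Suc (Suc n)}.
        snd x $$ (k - 1, (d - Suc (Suc n) + 2) - 1) = 0}"

definition Nsub :: "nat \<Rightarrow> nat \<Rightarrow> complex mat set" where
  "Nsub d j = {A \<in> orth_group d. \<exists>B \<in> orth_group j. \<exists>s :: nat \<Rightarrow> complex.
      (\<forall>r\<in>{j..<d}. s r = 1 \<or> s r = -1) \<and>
      A = mat d d (\<lambda>(r, c). if r < j \<and> c < j then B $$ (r, c)
                             else if r = c then s r else 0)}"

end

theory Submission
  imports Defs "Jordan_Normal_Form.Determinant"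
begin

(* Suppose g in O_d maps L^(i) into itself.  Applying g to (e_d, 0) and to the skew matrices
   E_(m,m+1) - E_(m+1,m), which all lie in L^(i), shows by descending induction on m >= d - i
   that column m of g vanishes off the diagonal once all later rows and columns are known to be
   diagonal; orthogonality of g then clears row m as well.  Conversely, a direct entry
   computation shows that every g of this block form, and with it g^-1 = g^T, maps L^(i) into
   itself, so g L^(i) = L^(i). *)

lemma sum_eq_single:
  fixes f :: "nat \<Rightarrow> 'a :: comm_monoid_add"
  assumes "a < n" "\<And>b. b < n \<Longrightarrow> b \<noteq> a \<Longrightarrow> f b = 0"
  shows "(\<Sum>b \<in> {0..<n}. f b) = f a"
  using assms by (subst sum.mono_neutral_right[of "{0..<n}" "{a}"]) auto

lemma index_mult_mat_sum:
  assumes "A \<in> carrier_mat n n" "B \<in> carrier_mat n n" "r < n" "c < n"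
  shows "(A * B) $$ (r, c) = (\<Sum>a \<in> {0..<n}. A $$ (r, a) * B $$ (a, c))"
  using assms by (simp add: scalar_prod_def)

lemma index_conjugate_mat:
  fixes A M :: "'a :: comm_semiring_0 mat"
  assumes "A \<in> carrier_mat n n" "M \<in> carrier_mat n n" "r < n" "c < n"
  shows "(A * M * transpose_mat A) $$ (r, c) = (\<Sum>b \<in> {0..<n}. (A * M) $$ (r, b) * A $$ (c, b))"
  using assms by (simp add: scalar_prod_def del: assoc_mult_mat)

lemma transpose_conjugate_skew:
  fixes A M :: "'a :: comm_ring_1 mat"
  assumes "A \<in> carrier_mat n n" "M \<in> carrier_mat n n" "transpose_mat M = - M"
  shows "transpose_mat (A * M * transpose_mat A) = - (A * M * transpose_mat A)"
  using assms by (simp add: transpose_mult[of _ n n _ n] mult_smult_assoc_mat)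

definition skew_unit_mat :: "nat \<Rightarrow> nat \<Rightarrow> nat \<Rightarrow> 'a :: ring_1 mat" where
  "skew_unit_mat n p q = mat n n (\<lambda>(a, b). if (a, b) = (p, q) then 1 else if (a, b) = (q, p) then -1 else 0)"

lemma transpose_skew_unit_mat:
  assumes "p \<noteq> q"
  shows "transpose_mat (skew_unit_mat n p q) = - skew_unit_mat n p q"
  using assms by (intro eq_matI) (auto simp: skew_unit_mat_def)

lemma index_mult_skew_unit_mat:
  fixes A :: "'a :: comm_ring_1 mat"
  assumes "A \<in> carrier_mat n n" "p < n" "q < n" "p \<noteq> q" "r < n" "b < n"
  shows "(A * skew_unit_mat n p q) $$ (r, b) =
    (if b = q then A $$ (r, p) else 0) - (if b = p then A $$ (r, q) else 0)"
  using assms by (auto simp: skew_unit_mat_def scalar_prod_def if_distrib[of "\<lambda>x. _ * x"] cong: if_cong)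

lemma index_conjugate_skew_unit_mat:
  fixes A :: "'a :: comm_ring_1 mat"
  assumes "A \<in> carrier_mat n n" "p < n" "q < n" "p \<noteq> q" "r < n" "c < n"
  shows "(A * skew_unit_mat n p q * transpose_mat A) $$ (r, c) =
    A $$ (r, p) * A $$ (c, q) - A $$ (r, q) * A $$ (c, p)"
proof -
  have "(A * skew_unit_mat n p q * transpose_mat A) $$ (r, c) =
      (\<Sum>b \<in> {0..<n}. (A * skew_unit_mat n p q) $$ (r, b) * A $$ (c, b))"
    using assms by (intro index_conjugate_mat) (auto simp: skew_unit_mat_def)
  also have "\<dots> = (\<Sum>b \<in> {0..<n}. (if b = q then A $$ (r, p) * A $$ (c, b) else 0) -
      (if b = p then A $$ (r, q) * A $$ (c, b) else 0))"
    using assms by (intro sum.cong) (auto simp: index_mult_skew_unit_mat left_diff_distrib)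
  also have "\<dots> = A $$ (r, p) * A $$ (c, q) - A $$ (r, q) * A $$ (c, p)"
    using assms by (simp add: sum_subtractf)
  finally show ?thesis .
qed

lemma orth_group_carrier: "g \<in> orth_group d \<Longrightarrow> g \<in> carrier_mat d d"
  by (simp add: orth_group_def)

lemma orth_group_transpose_mult: "g \<in> orth_group d \<Longrightarrow> transpose_mat g * g = 1\<^sub>m d"
  using mat_mult_left_right_inverse[of g d "transpose_mat g"] by (simp add: orth_group_def)

lemma transpose_orth_group: "g \<in> orth_group d \<Longrightarrow> transpose_mat g \<in> orth_group d"
  using orth_group_transpose_mult[of g d] by (simp add: orth_group_def)

lemma orth_group_rows_orthonormal:
  assumes "g \<in> orth_group d" "r < d" "c < d"
  shows "(\<Sum>k \<in> {0..<d}. g $$ (r, k) * g $$ (c, k)) = (if r = c then 1 else 0)"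
proof -
  have "(g * transpose_mat g) $$ (r, c) = (if r = c then 1 else 0)"
    using assms by (simp add: orth_group_def)
  then show ?thesis
    using assms orth_group_carrier[OF assms(1)] by (simp add: scalar_prod_def)
qed

lemma orth_group_cols_orthonormal:
  assumes "g \<in> orth_group d" "r < d" "c < d"
  shows "(\<Sum>k \<in> {0..<d}. g $$ (k, r) * g $$ (k, c)) = (if r = c then 1 else 0)"
  using orth_group_rows_orthonormal[OF transpose_orth_group[OF assms(1)] assms(2,3)]
    assms orth_group_carrier[OF assms(1)] by simp

lemma orth_group_diag_if_row_diag:
  assumes "g \<in> orth_group d" "m < d" "\<And>c. c < d \<Longrightarrow> c \<noteq> m \<Longrightarrow> g $$ (m, c) = 0"
  shows "g $$ (m, m) = 1 \<or> g $$ (m, m) = -1"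
proof -
  have "g $$ (m, m) * g $$ (m, m) = (\<Sum>k \<in> {0..<d}. g $$ (m, k) * g $$ (m, k))"
    using assms by (simp add: sum_eq_single)
  also have "\<dots> = 1" using orth_group_rows_orthonormal[OF assms(1,2,2)] by simp
  finally show ?thesis by (simp add: square_eq_1_iff)
qed

lemma orth_group_row_diag_if_col_diag:
  assumes "g \<in> orth_group d" "m < d" "\<And>r. r < d \<Longrightarrow> r \<noteq> m \<Longrightarrow> g $$ (r, m) = 0"
    and "c < d" "c \<noteq> m"
  shows "g $$ (m, c) = 0"
proof -
  have g: "g \<in> carrier_mat d d" using assms(1) by (rule orth_group_carrier)
  have "transpose_mat g $$ (m, m) \<noteq> 0"
    using orth_group_diag_if_row_diag[OF transpose_orth_group[OF assms(1)] assms(2)] assms(2,3) g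
    by fastforce
  moreover have "g $$ (m, m) * g $$ (m, c) = (\<Sum>k \<in> {0..<d}. g $$ (k, m) * g $$ (k, c))"
    using assms by (simp add: sum_eq_single)
  moreover have "\<dots> = 0" using orth_group_cols_orthonormal[OF assms(1,2,4)] assms(5) by simp
  ultimately show ?thesis using assms(2) g by simp
qed

definition diag_outside_block :: "nat \<Rightarrow> nat \<Rightarrow> 'a :: zero mat \<Rightarrow> bool" where
  "diag_outside_block d j A \<longleftrightarrow> (\<forall>r < d. \<forall>c < d. r \<noteq> c \<and> (j \<le> r \<or> j \<le> c) \<longrightarrow> A $$ (r, c) = 0)"

lemma diag_outside_blockD:
  "diag_outside_block d j A \<Longrightarrow> r < d \<Longrightarrow> c < d \<Longrightarrow> r \<noteq> c \<Longrightarrow> j \<le> r \<or> j \<le> c \<Longrightarrow> A $$ (r, c) = 0"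
  unfolding diag_outside_block_def by blast

lemma diag_outside_block_transpose:
  "A \<in> carrier_mat d d \<Longrightarrow> diag_outside_block d j (transpose_mat A) \<longleftrightarrow> diag_outside_block d j A"
  unfolding diag_outside_block_def by auto

lemma diag_outside_block_of_Suc:
  assumes g: "g \<in> orth_group d" and m: "m < d" and block: "diag_outside_block d (Suc m) g"
    and col: "\<And>r. r < d \<Longrightarrow> r \<noteq> m \<Longrightarrow> g $$ (r, m) = 0"
  shows "diag_outside_block d m g"
  unfolding diag_outside_block_def
proof (intro allI impI)
  fix r c assume r: "r < d" and c: "c < d" and rc: "r \<noteq> c \<and> (m \<le> r \<or> m \<le> c)"
  then consider "c = m" | "r = m" | "Suc m \<le> r \<or> Suc m \<le> c" by linarith
  then show "g $$ (r, c) = 0"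
  proof cases
    case 1
    then show ?thesis using col r rc by blast
  next
    case 2
    then show ?thesis using orth_group_row_diag_if_col_diag[OF g m col c] rc by blast
  next
    case 3
    then show ?thesis using diag_outside_blockD[OF block r c] rc by blast
  qed
qed

lemma leading_block_orth_group:
  assumes "g \<in> orth_group d" "j \<le> d" "diag_outside_block d j g"
  shows "mat j j (\<lambda>(r, c). g $$ (r, c)) \<in> orth_group j" (is "?B \<in> _")
proof -
  have "?B * transpose_mat ?B = 1\<^sub>m j"
  proof (rule eq_matI)
    fix r c assume "r < dim_row (1\<^sub>m j :: complex mat)" "c < dim_col (1\<^sub>m j :: complex mat)"
    then have rc: "r < j" "c < j" by auto
    have "(?B * transpose_mat ?B) $$ (r, c) = (\<Sum>k \<in> {0..<j}. g $$ (r, k) * g $$ (c, k))"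
      using rc by (simp add: scalar_prod_def)
    also have "\<dots> = (\<Sum>k \<in> {0..<d}. g $$ (r, k) * g $$ (c, k))"
      using assms rc by (intro sum.mono_neutral_left) (auto simp: diag_outside_blockD)
    also have "\<dots> = 1\<^sub>m j $$ (r, c)"
      using orth_group_rows_orthonormal[OF assms(1)] assms(2) rc by simp
    finally show "(?B * transpose_mat ?B) $$ (r, c) = 1\<^sub>m j $$ (r, c)" .
  qed auto
  then show ?thesis by (simp add: orth_group_def)
qed

lemma Nsub_eq:
  assumes "j \<le> d"
  shows "Nsub d j = {g \<in> orth_group d. diag_outside_block d j g}"
proof (intro equalityI subsetI)
  fix g assume "g \<in> Nsub d j"
  then show "g \<in> {g \<in> orth_group d. diag_outside_block d j g}"
    by (auto simp: Nsub_def diag_outside_block_def)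
next
  fix g assume "g \<in> {g \<in> orth_group d. diag_outside_block d j g}"
  then have g: "g \<in> orth_group d" and block: "diag_outside_block d j g" by auto
  define B where "B = mat j j (\<lambda>(r, c). g $$ (r, c))"
  show "g \<in> Nsub d j"
    unfolding Nsub_def
  proof (intro CollectI conjI bexI[of _ B] exI[of _ "\<lambda>r. g $$ (r, r)"] ballI)
    show "B \<in> orth_group j" using leading_block_orth_group[OF g assms block] by (simp add: B_def)
    show "g $$ (r, r) = 1 \<or> g $$ (r, r) = -1" if "r \<in> {j..<d}" for r
      using that by (intro orth_group_diag_if_row_diag[OF g]) (auto intro: diag_outside_blockD[OF block])
    show "g = mat d d (\<lambda>(r, c). if r < j \<and> c < j then B $$ (r, c) else if r = c then g $$ (r, r) else 0)"
      using orth_group_carrier[OF g] by (intro eq_matI) (auto simp: B_def diag_outside_blockD[OF block])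
  qed (rule g)
qed

lemma act_Vsp: "A \<in> carrier_mat d d \<Longrightarrow> x \<in> Vsp d \<Longrightarrow> act A x \<in> Vsp d"
  by (cases x) (auto simp: Vsp_def act_def transpose_conjugate_skew simp del: assoc_mult_mat)

lemma act_mult:
  assumes "A \<in> carrier_mat d d" "B \<in> carrier_mat d d" "x \<in> Vsp d"
  shows "act (A * B) x = act A (act B x)"
proof -
  obtain v M where x: "x = (v, M)" and v: "v \<in> carrier_vec d" and M: "M \<in> carrier_mat d d"
    using assms(3) by (auto simp: Vsp_def)
  have "A * B * M * transpose_mat (A * B) = A * (B * M * transpose_mat B) * transpose_mat A"
    using assms(1,2) M by (simp add: transpose_mult[OF assms(1,2)] assoc_mult_mat[of _ d d _ d _ d])
  then show ?thesis using assms(1,2) v by (simp add: act_def x del: assoc_mult_mat)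
qed

lemma act_one: "x \<in> Vsp d \<Longrightarrow> act (1\<^sub>m d) x = x"
  by (auto simp: Vsp_def act_def)

lemma act_image_eq_if_invariant:
  assumes "g \<in> orth_group d" "L \<subseteq> Vsp d"
    and "act g ` L \<subseteq> L" "act (transpose_mat g) ` L \<subseteq> L"
  shows "act g ` L = L"
proof (intro equalityI subsetI)
  fix x assume "x \<in> L"
  then have "x = act g (act (transpose_mat g) x)"
    using assms orth_group_carrier[OF assms(1)]
    by (auto simp: act_mult[symmetric] act_one orth_group_def)
  then show "x \<in> act g ` L" using assms(4) \<open>x \<in> L\<close> by blast
qed (use assms(3) in blast)

definition Lsub_explicit :: "nat \<Rightarrow> nat \<Rightarrow> (complex vec \<times> complex mat) set" where
  "Lsub_explicit d i = {(v, M) \<in> Vsp d. (\<forall>k. Suc k < d \<longrightarrow> v $ k = 0) \<and>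
     (\<forall>c \<in> {d - i<..<d}. \<forall>k. Suc k < c \<longrightarrow> M $$ (k, c) = 0)}"

lemma Lsub_explicit_Suc_Suc:
  assumes "Suc (Suc n) < d"
  shows "Lsub_explicit d (Suc (Suc n)) =
    {x \<in> Lsub_explicit d (Suc n). \<forall>k < d - Suc (Suc n). snd x $$ (k, d - Suc n) = 0}"
proof -
  have "{d - Suc (Suc n)<..<d} = insert (d - Suc n) {d - Suc n<..<d}"
    using assms by auto
  then show ?thesis using assms unfolding Lsub_explicit_def by auto
qed

lemma ball_atLeastAtMost_shift:
  "(\<forall>j \<in> {Suc 0..n}. P (j - Suc 0)) \<longleftrightarrow> (\<forall>k < n. P k)"
proof
  assume P: "\<forall>j \<in> {Suc 0..n}. P (j - Suc 0)"
  show "\<forall>k < n. P k"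
  proof (intro allI impI)
    fix k assume "k < n"
    then have "Suc k \<in> {Suc 0..n}" by simp
    then have "P (Suc k - Suc 0)" using P by blast
    then show "P k" by simp
  qed
qed auto

lemma Lsub_eq_explicit:
  assumes "1 \<le> i" "i < d"
  shows "Lsub d i = Lsub_explicit d i"
  using assms
proof (induction i rule: nat_induct_at_least)
  case base
  have "(\<forall>j \<in> {1..d - 1}. v $ (j - 1) = 0) \<longleftrightarrow> (\<forall>k. Suc k < d \<longrightarrow> v $ k = 0)" for v :: "complex vec"
    using ball_atLeastAtMost_shift[where P = "\<lambda>k. v $ k = 0"] by (simp add: less_diff_conv)
  then show ?case by (auto simp: Lsub_explicit_def)
next
  case (Suc n)
  then obtain m where n: "n = Suc m" by (cases n) auto
  have "d - Suc (Suc m) + 2 - 1 = d - Suc m" using Suc.prems n by simp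
  then show ?case using Suc n Lsub_explicit_Suc_Suc[of m d]
    by (simp add: ball_atLeastAtMost_shift[where P = "\<lambda>k. _ $$ (k, _) = 0"])
qed

lemma index_mult_mat_vec_zero_if_last_col_diag:
  assumes g: "g \<in> carrier_mat d d" and v: "v \<in> carrier_vec d"
    and col: "\<And>k. Suc k < d \<Longrightarrow> g $$ (k, d - 1) = 0"
    and v0: "\<And>k. Suc k < d \<Longrightarrow> v $ k = 0" and k: "Suc k < d"
  shows "(g *\<^sub>v v) $ k = 0"
proof -
  have "(g *\<^sub>v v) $ k = (\<Sum>a \<in> {0..<d}. g $$ (k, a) * v $ a)"
    using g v k by (auto simp: scalar_prod_def)
  also have "\<dots> = g $$ (k, d - 1) * v $ (d - 1)"
    using k by (intro sum_eq_single) (auto simp: v0)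
  finally show ?thesis using col k by simp
qed

lemma index_conjugate_mat_zero_if_block:
  fixes g M :: "'a :: comm_semiring_0 mat"
  assumes g: "g \<in> carrier_mat d d" and M: "M \<in> carrier_mat d d"
    and block: "diag_outside_block d j g" and c: "j \<le> c" "c < d" and k: "k < d"
    and M0: "\<And>a. a < d \<Longrightarrow> a = k \<or> a < j \<Longrightarrow> M $$ (a, c) = 0"
  shows "(g * M * transpose_mat g) $$ (k, c) = 0"
proof -
  have "(g * M * transpose_mat g) $$ (k, c) = (\<Sum>b \<in> {0..<d}. (g * M) $$ (k, b) * g $$ (c, b))"
    using g M c k by (intro index_conjugate_mat) auto
  also have "\<dots> = (g * M) $$ (k, c) * g $$ (c, c)"
    using c by (intro sum_eq_single) (auto simp: diag_outside_blockD[OF block])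
  also have "(g * M) $$ (k, c) = (\<Sum>a \<in> {0..<d}. g $$ (k, a) * M $$ (a, c))"
    using g M c k by (intro index_mult_mat_sum) auto
  also have "\<dots> = 0"
  proof (intro sum.neutral ballI)
    fix a assume a: "a \<in> {0..<d}"
    show "g $$ (k, a) * M $$ (a, c) = 0"
    proof (cases "a = k \<or> a < j")
      case False
      then show ?thesis using a k diag_outside_blockD[OF block, of k a] by simp
    qed (use a M0 in simp)
  qed
  finally show ?thesis by simp
qed

lemma act_mem_Lsub_explicit:
  assumes g: "g \<in> carrier_mat d d" and "1 \<le> i" and block: "diag_outside_block d (d - i) g"
    and x: "x \<in> Lsub_explicit d i"
  shows "act g x \<in> Lsub_explicit d i"
proof -
  obtain v M where xvM: "x = (v, M)" by (cases x)
  have V: "(v, M) \<in> Vsp d" and v: "v \<in> carrier_vec d" and M: "M \<in> carrier_mat d d"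
    and v0: "\<And>k. Suc k < d \<Longrightarrow> v $ k = 0"
    and M0: "\<And>c k. d - i < c \<Longrightarrow> c < d \<Longrightarrow> Suc k < c \<Longrightarrow> M $$ (k, c) = 0"
    using x by (auto simp: Lsub_explicit_def Vsp_def xvM)
  have "g $$ (k, d - 1) = 0" if "Suc k < d" for k
    using that \<open>1 \<le> i\<close> by (intro diag_outside_blockD[OF block]) auto
  then have "(g *\<^sub>v v) $ k = 0" if "Suc k < d" for k
    using index_mult_mat_vec_zero_if_last_col_diag[OF g v _ v0 that] by blast
  moreover have "(g * M * transpose_mat g) $$ (k, c) = 0"
    if c: "d - i < c" "c < d" and k: "Suc k < c" for c k
    using c k by (intro index_conjugate_mat_zero_if_block[OF g M block]) (auto intro: M0)
  ultimately show ?thesis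
    using act_Vsp[OF g V] by (auto simp: Lsub_explicit_def act_def xvM)
qed

lemma last_col_zero_if_invariant:
  assumes g: "g \<in> carrier_mat d d" and inv: "act g ` Lsub_explicit d i \<subseteq> Lsub_explicit d i"
    and r: "Suc r < d"
  shows "g $$ (r, d - 1) = 0"
proof -
  have "(unit_vec d (d - 1), 0\<^sub>m d d) \<in> Lsub_explicit d i"
    by (auto simp: Lsub_explicit_def Vsp_def)
  then have "act g (unit_vec d (d - 1), 0\<^sub>m d d) \<in> Lsub_explicit d i" using inv by blast
  then have "(g *\<^sub>v unit_vec d (d - 1)) $ r = 0" using r by (simp add: Lsub_explicit_def act_def)
  then show ?thesis using g r by simp
qed

lemma col_zero_if_invariant:
  assumes g: "g \<in> orth_group d" and inv: "act g ` Lsub_explicit d i \<subseteq> Lsub_explicit d i"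
    and m: "d - i \<le> m" "Suc m < d" and block: "diag_outside_block d (Suc m) g" and r: "r < m"
  shows "g $$ (r, m) = 0"
proof -
  have gc: "g \<in> carrier_mat d d" using g by (rule orth_group_carrier)
  let ?S = "skew_unit_mat d m (Suc m) :: complex mat"
  (* Row m + 1 of g is already diagonal, so conjugating ?S exposes g(r, m) in column m + 1. *)
  have "(0\<^sub>v d, ?S) \<in> Lsub_explicit d i"
    using transpose_skew_unit_mat[of m "Suc m" d]
    by (auto simp: Lsub_explicit_def Vsp_def skew_unit_mat_def)
  then have "act g (0\<^sub>v d, ?S) \<in> Lsub_explicit d i" using inv by blast
  then have "(g * ?S * transpose_mat g) $$ (r, Suc m) = 0"
    using m r by (auto simp: Lsub_explicit_def act_def)
  moreover have "(g * ?S * transpose_mat g) $$ (r, Suc m) =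
      g $$ (r, m) * g $$ (Suc m, Suc m) - g $$ (r, Suc m) * g $$ (Suc m, m)"
    using gc m r by (intro index_conjugate_skew_unit_mat) auto
  moreover have "g $$ (Suc m, m) = 0"
    using diag_outside_blockD[OF block] m by simp
  moreover have "g $$ (Suc m, Suc m) \<noteq> 0"
    using orth_group_diag_if_row_diag[OF g m(2)] diag_outside_blockD[OF block] m(2) by fastforce
  ultimately show ?thesis by simp
qed

lemma diag_outside_block_if_invariant:
  assumes g: "g \<in> orth_group d" and "i < d"
    and inv: "act g ` Lsub_explicit d i \<subseteq> Lsub_explicit d i"
  shows "diag_outside_block d (d - i) g"
proof -
  have "diag_outside_block d (d - n) g" if "n \<le> i" for n
    using that
  proof (induction n)
    case 0
    show ?case by (simp add: diag_outside_block_def)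
  next
    case (Suc n)
    define m where "m = d - Suc n"
    have m: "m < d" "d - i \<le> m" using Suc.prems \<open>i < d\<close> by (auto simp: m_def)
    have block: "diag_outside_block d (Suc m) g"
      using Suc \<open>i < d\<close> by (simp add: m_def Suc_diff_Suc)
    have "g $$ (r, m) = 0" if r: "r < d" "r \<noteq> m" for r
    proof -
      consider "m < r" | "r < m" "Suc m = d" | "r < m" "Suc m < d" using r m by linarith
      then show ?thesis
      proof cases
        case 1
        then show ?thesis using diag_outside_blockD[OF block] r by simp
      next
        case 2
        then show ?thesis using last_col_zero_if_invariant[OF orth_group_carrier[OF g] inv] by auto
      next
        case 3
        then show ?thesis using col_zero_if_invariant[OF g inv m(2) _ block] by blast
      qed
    qed
    then show ?case
      using diag_outside_block_of_Suc[OF g m(1) block] by (simp add: m_def)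
  qed
  then show ?thesis by simp
qed

lemma act_image_Lsub_explicit_eq_iff:
  assumes g: "g \<in> orth_group d" and "1 \<le> i" "i < d"
  shows "act g ` Lsub_explicit d i = Lsub_explicit d i \<longleftrightarrow> diag_outside_block d (d - i) g"
proof
  assume "act g ` Lsub_explicit d i = Lsub_explicit d i"
  then show "diag_outside_block d (d - i) g"
    using diag_outside_block_if_invariant[OF g \<open>i < d\<close>] by simp
next
  have gT: "transpose_mat g \<in> orth_group d" using g by (rule transpose_orth_group)
  assume block: "diag_outside_block d (d - i) g"
  then have blockT: "diag_outside_block d (d - i) (transpose_mat g)"
    using diag_outside_block_transpose[OF orth_group_carrier[OF g]] by simp
  show "act g ` Lsub_explicit d i = Lsub_explicit d i"
  proof (rule act_image_eq_if_invariant[OF g])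
    show "Lsub_explicit d i \<subseteq> Vsp d" by (auto simp: Lsub_explicit_def)
    show "act g ` Lsub_explicit d i \<subseteq> Lsub_explicit d i"
      using act_mem_Lsub_explicit[OF orth_group_carrier[OF g] \<open>1 \<le> i\<close> block] by blast
    show "act (transpose_mat g) ` Lsub_explicit d i \<subseteq> Lsub_explicit d i"
      using act_mem_Lsub_explicit[OF orth_group_carrier[OF gT] \<open>1 \<le> i\<close> blockT] by blast
  qed
qed

theorem proposition3p5:
  fixes d i :: nat
  assumes "2 \<le> d" and "1 \<le> i" and "i < d"
  shows "{g \<in> orth_group d. act g ` Lsub d i = Lsub d i} = Nsub d (d - i)"
  using act_image_Lsub_explicit_eq_iff[OF _ assms(2,3)]
  by (auto simp: Lsub_eq_explicit[OF assms(2,3)] Nsub_eq)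

end
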